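(* Let $\mathcal{B}\subseteq\mathcal{P}(X)$ be a countable admissible algebra and let $\mathcal{D}\subseteq\mathcal{B}$. Then there is a set $A\subseteq X$ such that: (i) the algebra generated by $\mathcal{B}\cup\{A\}$ is admissible; (ii) for every $D\in\mathcal{D}$ we have $D_{|n}\subseteq A_{|n}$ for all but finitely many $n\in\omega$; (iii) $\mu(A)\le\sum_{D\in\mathcal{D}}\mu(D)$.
   Context: $\omega=\{0,1,2,\dots\}$, $2^\omega$ is the Cantor set, $\lambda$ is the usual product probability measure on $2^\omega$, and $\mathrm{Clop}(2^\omega)$ is the algebra of clopen subsets of $2^\omega$. Let $X=\omega\times 2^\omega$. For $B\subseteq X$ and $n\in\omega$, $B_{|n}=\{t\in 2^\omega:(n,t)\in B\}$. A set $B\subseteq X$ is admissible if $B_{|n}\in\mathrm{Clop}(2^\omega)$ for all $n\in\omega$ and $\lim_n\lambda(B_{|n})$ exists; in that case $\mu(B):=\lim_n\lambda(B_{|n})$. An algebra of subsets of $X$ is admissible if all its elements are admissible. *)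

theory Defs
  imports "HOL-Probability.Probability"
begin

type_synonym cantor = "nat \<Rightarrow> bool"
type_synonym X = "nat \<times> cantor"

definition cantor_top :: "cantor topology" where
  "cantor_top = product_topology (\<lambda>_::nat. discrete_topology (UNIV::bool set)) UNIV"

definition Clop :: "cantor set set" where
  "Clop = {S. openin cantor_top S \<and> closedin cantor_top S}"

definition lam_measure :: "cantor measure" where
  "lam_measure = PiM UNIV (\<lambda>_::nat. measure_pmf (bernoulli_pmf (1/2)))"

definition lam :: "cantor set \<Rightarrow> real" where
  "lam S = measure lam_measure S"

definition slice :: "X set \<Rightarrow> nat \<Rightarrow> cantor set" where
  "slice B n = {t. (n, t) \<in> B}"

definition admissible :: "X set \<Rightarrow> bool" where
  "admissible B \<longleftrightarrow> (\<forall>n. slice B n \<in> Clop) \<and> convergent (\<lambda>n. lam (slice B n))"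

definition mu :: "X set \<Rightarrow> real" where
  "mu B = lim (\<lambda>n. lam (slice B n))"

definition admissible_algebra :: "X set set \<Rightarrow> bool" where
  "admissible_algebra \<B> \<longleftrightarrow> algebra UNIV \<B> \<and> (\<forall>B\<in>\<B>. admissible B)"

definition gen_algebra :: "X set set \<Rightarrow> X set set" where
  "gen_algebra S = \<Inter>{M. algebra UNIV M \<and> S \<subseteq> M}"

end

theory Submission
  imports Defs
begin

text \<open>Enumerate \<open>\<D>\<close> and let \<open>U m\<close> be the union of its first \<open>m\<close> members, so that
  \<open>\<mu>(U m) \<le> \<Sum>\<^sub>D \<mu>(D)\<close>. For \<open>B \<in> \<B>\<close> the values \<open>\<mu>(B \<inter> U m)\<close> increase to a limit \<open>L B\<close>.
  As \<open>\<B>\<close> is countable, a diagonal argument gives \<open>k n \<rightarrow> \<infinity>\<close> so slowly that the measure of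
  the \<open>n\<close>-th slice of \<open>B \<inter> U (k n)\<close> tends to \<open>L B\<close> for all \<open>B \<in> \<B>\<close> simultaneously. Let \<open>A\<close>
  have the same \<open>n\<close>-th slice as \<open>U (k n)\<close>. Every member of the algebra generated by
  \<open>\<B> \<union> {A}\<close> has the form \<open>(B\<^sub>1 \<inter> A) \<union> (B\<^sub>2 - A)\<close>; its \<open>n\<close>-th slice is that of a member of
  \<open>\<B>\<close>, and its slice measures converge by the choice of \<open>k\<close>. Finally
  \<open>\<mu>(A) = L X = lim\<^sub>m \<mu>(U m)\<close>.\<close>

lemma diagonal_tendsto:
  fixes g :: "nat \<Rightarrow> nat \<Rightarrow> nat \<Rightarrow> 'a::metric_space"
  assumes g: "\<And>j m. (\<lambda>n. g j m n) \<longlonglongrightarrow> c j m" and c: "\<And>j. c j \<longlonglongrightarrow> L j"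
  shows "\<exists>k. filterlim k at_top sequentially \<and> (\<forall>j. (\<lambda>n. g j (k n) n) \<longlonglongrightarrow> L j)"
proof -
  have "\<forall>\<^sub>F n in sequentially. \<forall>j\<in>{..m}. dist (g j m n) (c j m) < inverse (real (Suc m))" for m
    using g by (intro eventually_ball_finite) (auto intro: tendstoD)
  then have "\<forall>m. \<exists>N. \<forall>n\<ge>N. \<forall>j\<le>m. dist (g j m n) (c j m) < inverse (real (Suc m))"
    unfolding eventually_sequentially atMost_iff by blast
  then obtain N where N: "\<And>m n j. N m \<le> n \<Longrightarrow> j \<le> m \<Longrightarrow> dist (g j m n) (c j m) < inverse (real (Suc m))"
    by metis
  \<comment> \<open>At time \<open>n\<close>, use the largest \<open>m \<le> n\<close> whose accuracy threshold \<open>N m\<close> is reached.\<close>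
  define k where "k n = Max {m. m \<le> n \<and> N m \<le> n}" for n
  have k_max: "m \<le> k n" if "m \<le> n" "N m \<le> n" for m n
    unfolding k_def using that by (intro Max_ge) auto
  have k_good: "N (k n) \<le> n" if "N 0 \<le> n" for n
  proof -
    have "k n \<in> {m. m \<le> n \<and> N m \<le> n}"
      unfolding k_def using that by (intro Max_in) auto
    then show ?thesis by simp
  qed
  have k_lim: "filterlim k at_top sequentially"
    unfolding filterlim_at_top eventually_sequentially using k_max by (metis max.bounded_iff)
  have "(\<lambda>n. g j (k n) n) \<longlonglongrightarrow> L j" for j
  proof -
    have bound: "dist (g j (k n) n) (c j (k n)) < inverse (real (Suc (k n)))" if "N 0 \<le> n" "j \<le> k n" for n
      using N[OF k_good[OF that(1)] that(2)] .
    have close: "\<forall>\<^sub>F n in sequentially. dist (g j (k n) n) (c j (k n)) \<le> inverse (real (Suc (k n)))"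
      using eventually_ge_at_top[of "N 0"] filterlim_at_top[THEN iffD1, OF k_lim, rule_format, of j]
      by eventually_elim (rule less_imp_le[OF bound])
    have "(\<lambda>n. inverse (real (Suc (k n)))) \<longlonglongrightarrow> 0"
      by (rule filterlim_compose[OF LIMSEQ_inverse_real_of_nat k_lim])
    then have "(\<lambda>n. dist (g j (k n) n) (c j (k n))) \<longlonglongrightarrow> 0"
      by (rule tendsto_sandwich[rotated 2, OF tendsto_const]) (use close in auto)
    moreover have "(\<lambda>n. dist (c j (k n)) (L j)) \<longlonglongrightarrow> 0"
      by (rule tendsto_dist_iff[THEN iffD1, OF filterlim_compose[OF c k_lim]])
    ultimately have sum_lim: "(\<lambda>n. dist (g j (k n) n) (c j (k n)) + dist (c j (k n)) (L j)) \<longlonglongrightarrow> 0"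
      by (rule tendsto_add_zero)
    have "(\<lambda>n. dist (g j (k n) n) (L j)) \<longlonglongrightarrow> 0"
    proof (rule tendsto_sandwich[OF _ _ tendsto_const sum_lim])
      show "\<forall>\<^sub>F n in sequentially. 0 \<le> dist (g j (k n) n) (L j)"
        by simp
      show "\<forall>\<^sub>F n in sequentially. dist (g j (k n) n) (L j) \<le> dist (g j (k n) n) (c j (k n)) + dist (c j (k n)) (L j)"
        by (simp add: dist_triangle)
    qed
    then show ?thesis
      by (rule tendsto_dist_iff[THEN iffD2])
  qed
  with k_lim show ?thesis by blast
qed

lemma diagonal_tendsto_countable:
  fixes g :: "'i \<Rightarrow> nat \<Rightarrow> nat \<Rightarrow> 'a::metric_space"
  assumes I: "countable I"
    and g: "\<And>i m. i \<in> I \<Longrightarrow> (\<lambda>n. g i m n) \<longlonglongrightarrow> c i m" and c: "\<And>i. i \<in> I \<Longrightarrow> c i \<longlonglongrightarrow> L i"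
  shows "\<exists>k. filterlim k at_top sequentially \<and> (\<forall>i\<in>I. (\<lambda>n. g i (k n) n) \<longlonglongrightarrow> L i)"
proof (cases "I = {}")
  case True
  then show ?thesis
    using filterlim_ident by blast
next
  case False
  let ?i = "from_nat_into I"
  have "?i j \<in> I" for j
    using False by (rule from_nat_into)
  then obtain k where "filterlim k at_top sequentially" "\<And>j. (\<lambda>n. g (?i j) (k n) n) \<longlonglongrightarrow> L (?i j)"
    using diagonal_tendsto[of "\<lambda>j. g (?i j)" "\<lambda>j. c (?i j)" "\<lambda>j. L (?i j)"] g c by blast
  moreover have "I \<subseteq> range ?i"
    using I by (rule subset_range_from_nat_into)
  ultimately show ?thesis
    by blast
qed

lemma euclidean_bool: "(euclidean :: bool topology) = discrete_topology UNIV"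
  by (rule topology_eq[THEN iffD2]) (simp add: Topological_Spaces.open_discrete)

lemma cantor_top_eq_euclidean: "cantor_top = euclidean"
  unfolding cantor_top_def euclidean_bool[symmetric] by (rule euclidean_product_topology)

instance bool :: second_countable_topology
proof
  have "open = generate_topology (range (\<lambda>b::bool. {b}))"
  proof (intro ext iffI)
    fix S :: "bool set"
    have "generate_topology (range (\<lambda>b. {b})) (\<Union>b\<in>S. {b})"
      by (intro generate_topology_Union) (auto intro: generate_topology.intros)
    then show "generate_topology (range (\<lambda>b. {b})) S" by simp
  qed (simp add: Topological_Spaces.open_discrete)
  then show "\<exists>B::bool set set. countable B \<and> open = generate_topology B"
    by blast
qed

lemma sets_lam_measure: "sets lam_measure = sets borel"
proof -
  have "sets (borel :: bool measure) = UNIV"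
    by (auto simp: borel_def intro!: sigma_sets.Basic Topological_Spaces.open_discrete)
  then show ?thesis
    unfolding lam_measure_def sets_PiM_equal_borel[symmetric]
    by (intro sets_PiM_cong) simp_all
qed

lemma Clop_in_sets_lam_measure: "S \<in> Clop \<Longrightarrow> S \<in> sets lam_measure"
  unfolding Clop_def sets_lam_measure cantor_top_eq_euclidean
  by (auto simp: open_openin[symmetric])

interpretation lam: prob_space lam_measure
  unfolding lam_measure_def by (intro prob_space_PiM) (simp add: measure_pmf.prob_space_axioms)

lemma lam_split:
  assumes "P \<in> sets lam_measure" "Q \<in> sets lam_measure" "R \<in> sets lam_measure"
  shows "lam ((P \<inter> R) \<union> (Q - R)) = lam (P \<inter> R) + lam Q - lam (Q \<inter> R)"
proof -
  have "lam ((P \<inter> R) \<union> (Q - R)) = lam (P \<inter> R) + lam (Q - R)"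
    unfolding lam_def using assms by (intro lam.finite_measure_Union) auto
  moreover have "lam (Q - R) = lam Q - lam (Q \<inter> R)"
    unfolding lam_def using assms by (intro lam.finite_measure_Diff') auto
  ultimately show ?thesis by simp
qed

lemma slice_Int [simp]: "slice (S \<inter> T) n = slice S n \<inter> slice T n"
  and slice_Un [simp]: "slice (S \<union> T) n = slice S n \<union> slice T n"
  and slice_Diff [simp]: "slice (S - T) n = slice S n - slice T n"
  and slice_empty [simp]: "slice {} n = {}"
  and slice_Union: "slice (\<Union>F) n = (\<Union>D\<in>F. slice D n)"
  and slice_mono: "S \<subseteq> T \<Longrightarrow> slice S n \<subseteq> slice T n"
  by (auto simp: slice_def)

definition diag_set :: "(nat \<Rightarrow> X set) \<Rightarrow> (nat \<Rightarrow> nat) \<Rightarrow> X set" where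
  "diag_set U k = {(n, t). (n, t) \<in> U (k n)}"

lemma slice_diag_set [simp]: "slice (diag_set U k) n = slice (U (k n)) n"
  by (simp add: diag_set_def slice_def)

lemma eventually_slice_subset_diag_set:
  assumes "incseq U" "filterlim k at_top sequentially" "D \<subseteq> U m"
  shows "\<forall>\<^sub>F n in sequentially. slice D n \<subseteq> slice (diag_set U k) n"
proof -
  have "slice D n \<subseteq> slice (diag_set U k) n" if "m \<le> k n" for n
    using assms(3) monoD[OF assms(1) that] by (simp add: slice_mono)
  moreover have "\<forall>\<^sub>F n in sequentially. m \<le> k n"
    using assms(2) by (simp add: filterlim_at_top)
  ultimately show ?thesis
    by (simp add: eventually_mono)
qed

lemma mu_empty: "mu {} = 0"
  unfolding mu_def lam_def by (simp add: limI)

lemma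
  assumes "admissible_algebra \<B>" "E \<in> \<B>"
  shows admissible_algebra_slice_in_sets: "slice E n \<in> sets lam_measure"
    and admissible_algebra_tendsto_mu: "(\<lambda>n. lam (slice E n)) \<longlonglongrightarrow> mu E"
  using assms Clop_in_sets_lam_measure
  unfolding admissible_algebra_def admissible_def mu_def by (auto simp: convergent_LIMSEQ_iff)

lemma mu_nonneg: "admissible_algebra \<B> \<Longrightarrow> E \<in> \<B> \<Longrightarrow> 0 \<le> mu E"
  by (rule LIMSEQ_le_const[OF admissible_algebra_tendsto_mu]) (auto simp: lam_def)

lemma mu_le_1: "admissible_algebra \<B> \<Longrightarrow> E \<in> \<B> \<Longrightarrow> mu E \<le> 1"
  by (rule LIMSEQ_le_const2[OF admissible_algebra_tendsto_mu]) (auto simp: lam_def)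

lemma mu_mono:
  assumes "admissible_algebra \<B>" and "E \<in> \<B>" "F \<in> \<B>" "E \<subseteq> F"
  shows "mu E \<le> mu F"
proof (rule LIMSEQ_le[OF admissible_algebra_tendsto_mu admissible_algebra_tendsto_mu])
  show "\<exists>N. \<forall>n\<ge>N. lam (slice E n) \<le> lam (slice F n)"
    unfolding lam_def using assms
    by (auto intro!: lam.finite_measure_mono admissible_algebra_slice_in_sets slice_mono)
qed (use assms in auto)

lemma mu_Union_le:
  assumes \<B>: "admissible_algebra \<B>" and F: "finite F" "F \<subseteq> \<B>"
  shows "mu (\<Union>F) \<le> (\<Sum>D\<in>F. mu D)"
proof -
  interpret algebra UNIV \<B> using \<B> unfolding admissible_algebra_def by simp
  have "lam (slice (\<Union>F) n) \<le> (\<Sum>D\<in>F. lam (slice D n))" for n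
    unfolding slice_Union lam_def using F
    by (intro lam.finite_measure_subadditive_finite) (auto intro!: admissible_algebra_slice_in_sets[OF \<B>])
  moreover have "(\<lambda>n. \<Sum>D\<in>F. lam (slice D n)) \<longlonglongrightarrow> (\<Sum>D\<in>F. mu D)"
    using F by (intro tendsto_sum admissible_algebra_tendsto_mu[OF \<B>]) auto
  ultimately show ?thesis
    using F by (intro LIMSEQ_le[OF admissible_algebra_tendsto_mu[OF \<B>]]) auto
qed

lemma algebra_gen_algebra: "algebra UNIV (gen_algebra S)"
  unfolding gen_algebra_def algebra_iff_Un by auto

lemma gen_algebra_insert_subset:
  assumes "algebra UNIV \<M>"
  shows "gen_algebra (\<M> \<union> {A}) \<subseteq> {(B\<^sub>1 \<inter> A) \<union> (B\<^sub>2 - A) | B\<^sub>1 B\<^sub>2. B\<^sub>1 \<in> \<M> \<and> B\<^sub>2 \<in> \<M>}"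
    (is "_ \<subseteq> ?C")
proof -
  interpret algebra UNIV \<M> by (rule assms)
  have in_C: "(B\<^sub>1 \<inter> A) \<union> (B\<^sub>2 - A) \<in> ?C" if "B\<^sub>1 \<in> \<M>" "B\<^sub>2 \<in> \<M>" for B\<^sub>1 B\<^sub>2
    using that by blast
  have "algebra UNIV ?C"
    unfolding algebra_iff_Un
  proof (intro conjI ballI)
    show "{} \<in> ?C"
      using in_C[of "{}" "{}"] by simp
  next
    fix E assume "E \<in> ?C"
    then obtain B\<^sub>1 B\<^sub>2 where E: "E = (B\<^sub>1 \<inter> A) \<union> (B\<^sub>2 - A)" and B: "B\<^sub>1 \<in> \<M>" "B\<^sub>2 \<in> \<M>"
      by blast
    have "UNIV - E = ((UNIV - B\<^sub>1) \<inter> A) \<union> ((UNIV - B\<^sub>2) - A)"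
      unfolding E by blast
    also have "\<dots> \<in> ?C"
      using B by (intro in_C compl_sets)
    finally show "UNIV - E \<in> ?C" .
  next
    fix E E' assume "E \<in> ?C" "E' \<in> ?C"
    then obtain B\<^sub>1 B\<^sub>2 B\<^sub>1' B\<^sub>2' where E: "E = (B\<^sub>1 \<inter> A) \<union> (B\<^sub>2 - A)" "E' = (B\<^sub>1' \<inter> A) \<union> (B\<^sub>2' - A)"
      and B: "B\<^sub>1 \<in> \<M>" "B\<^sub>2 \<in> \<M>" "B\<^sub>1' \<in> \<M>" "B\<^sub>2' \<in> \<M>"
      by blast
    have "E \<union> E' = ((B\<^sub>1 \<union> B\<^sub>1') \<inter> A) \<union> ((B\<^sub>2 \<union> B\<^sub>2') - A)"
      unfolding E by blast
    also have "\<dots> \<in> ?C"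
      using B by (intro in_C Un)
    finally show "E \<union> E' \<in> ?C" .
  qed simp
  moreover have "\<M> \<union> {A} \<subseteq> ?C"
    using in_C[of UNIV "{}"] in_C[of B B for B] by (auto simp: Int_Diff_Un)
  ultimately show ?thesis
    unfolding gen_algebra_def by blast
qed

lemma admissible_algebra_gen_algebra_insert:
  assumes \<B>: "admissible_algebra \<B>"
    and slice_A: "\<And>n. \<exists>V\<in>\<B>. slice A n = slice V n"
    and conv: "\<And>B. B \<in> \<B> \<Longrightarrow> convergent (\<lambda>n. lam (slice (B \<inter> A) n))"
  shows "admissible_algebra (gen_algebra (\<B> \<union> {A}))"
proof -
  interpret algebra UNIV \<B> using \<B> unfolding admissible_algebra_def by simp
  have "admissible ((B\<^sub>1 \<inter> A) \<union> (B\<^sub>2 - A))" if B: "B\<^sub>1 \<in> \<B>" "B\<^sub>2 \<in> \<B>" for B\<^sub>1 B\<^sub>2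
  proof -
    let ?E = "(B\<^sub>1 \<inter> A) \<union> (B\<^sub>2 - A)"
    have "slice ?E n \<in> Clop" for n
    proof -
      obtain V where "V \<in> \<B>" "slice A n = slice V n"
        using slice_A by blast
      then have "slice ?E n = slice ((B\<^sub>1 \<inter> V) \<union> (B\<^sub>2 - V)) n" and "(B\<^sub>1 \<inter> V) \<union> (B\<^sub>2 - V) \<in> \<B>"
        using B by auto
      then show ?thesis
        using \<B> unfolding admissible_algebra_def admissible_def by metis
    qed
    moreover have "lam (slice ?E n) = lam (slice (B\<^sub>1 \<inter> A) n) + lam (slice B\<^sub>2 n) - lam (slice (B\<^sub>2 \<inter> A) n)" for n
    proof -
      obtain V where "V \<in> \<B>" "slice A n = slice V n"
        using slice_A by blast
      then show ?thesis
        using B by (simp add: lam_split admissible_algebra_slice_in_sets[OF \<B>])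
    qed
    moreover have "convergent (\<lambda>n. lam (slice (B\<^sub>1 \<inter> A) n) + lam (slice B\<^sub>2 n) - lam (slice (B\<^sub>2 \<inter> A) n))"
      using B conv \<B> unfolding admissible_algebra_def admissible_def
      by (intro convergent_add convergent_diff) auto
    ultimately show ?thesis
      unfolding admissible_def by simp
  qed
  then show ?thesis
    using algebra_gen_algebra gen_algebra_insert_subset[OF algebra_axioms, of A]
    unfolding admissible_algebra_def by blast
qed

lemma exists_exhausting_chain:
  assumes \<B>: "admissible_algebra \<B>" and "countable \<D>" "\<D> \<subseteq> \<B>"
  obtains U where "incseq U" "range U \<subseteq> \<B>" "\<And>D. D \<in> \<D> \<Longrightarrow> \<exists>m. D \<subseteq> U m"
    "\<And>m. ennreal (mu (U m)) \<le> (\<Sum>\<^sub>\<infinity>D\<in>\<D>. ennreal (mu D))"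
proof -
  interpret algebra UNIV \<B> using \<B> unfolding admissible_algebra_def by simp
  define d where "d = from_nat_into (insert {} \<D>)"
  \<comment> \<open>\<open>from_nat_into\<close> needs a nonempty set; the extra member \<open>{}\<close> does not change the sum.\<close>
  have range_d: "range d = insert {} \<D>"
    unfolding d_def using assms by (intro range_from_nat_into) auto
  have "insert {} \<D> \<subseteq> \<B>"
    using assms(3) by simp
  then have d_in: "d i \<in> \<B>" for i
    unfolding range_d[symmetric] by blast
  define U where "U m = \<Union>(d ` {..m})" for m
  have "incseq U"
    unfolding U_def by (intro monoI Union_mono image_mono) auto
  moreover have "range U \<subseteq> \<B>"
    unfolding U_def using d_in by auto
  moreover have "\<exists>m. D \<subseteq> U m" if "D \<in> \<D>" for D
  proof -
    have "D \<in> range d"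
      using that range_d by simp
    then obtain i where "D = d i"
      by blast
    then have "D \<subseteq> U i"
      unfolding U_def by auto
    then show ?thesis ..
  qed
  moreover have "ennreal (mu (U m)) \<le> (\<Sum>\<^sub>\<infinity>D\<in>\<D>. ennreal (mu D))" for m
  proof -
    have fin: "finite (d ` {..m})" and sub: "d ` {..m} \<subseteq> \<B>"
      using d_in by auto
    have "ennreal (mu (U m)) \<le> ennreal (\<Sum>D\<in>d ` {..m}. mu D)"
      unfolding U_def by (intro ennreal_leI mu_Union_le[OF \<B> fin sub])
    also have "\<dots> = (\<Sum>\<^sub>\<infinity>D\<in>d ` {..m}. ennreal (mu D))"
      using fin sub mu_nonneg[OF \<B>] by (subst sum_ennreal[symmetric]) auto
    also have "\<dots> \<le> (\<Sum>\<^sub>\<infinity>D\<in>\<D>. ennreal (mu D))"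
    proof (rule infsum_mono_neutral)
      show "(\<lambda>D. ennreal (mu D)) summable_on d ` {..m}" "(\<lambda>D. ennreal (mu D)) summable_on \<D>"
        by (simp_all add: nonneg_summable_on_complete)
    next
      fix D assume "D \<in> d ` {..m} - \<D>"
      then have "D = {}"
        using range_d by blast
      then show "ennreal (mu D) \<le> 0"
        by (simp add: mu_empty)
    qed simp_all
    finally show ?thesis .
  qed
  ultimately show ?thesis
    using that by blast
qed

lemma exists_diagonal_index:
  assumes "countable \<B>" and \<B>: "admissible_algebra \<B>" and U: "incseq U" "range U \<subseteq> \<B>"
  obtains k L where "filterlim k at_top sequentially"
    "\<And>B. B \<in> \<B> \<Longrightarrow> (\<lambda>n. lam (slice (B \<inter> U (k n)) n)) \<longlonglongrightarrow> L B"
    "\<And>B. B \<in> \<B> \<Longrightarrow> (\<lambda>m. mu (B \<inter> U m)) \<longlonglongrightarrow> L B"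
proof -
  interpret algebra UNIV \<B> using \<B> unfolding admissible_algebra_def by simp
  have BU: "B \<inter> U m \<in> \<B>" if "B \<in> \<B>" for B m
    using that U by auto
  have "convergent (\<lambda>m. mu (B \<inter> U m))" if "B \<in> \<B>" for B
  proof -
    have "incseq (\<lambda>m. mu (B \<inter> U m))"
    proof (rule monoI)
      fix m m' :: nat assume "m \<le> m'"
      then have "U m \<subseteq> U m'"
        using U(1) by (simp add: monoD)
      then show "mu (B \<inter> U m) \<le> mu (B \<inter> U m')"
        by (intro mu_mono[OF \<B> BU[OF that] BU[OF that]]) auto
    qed
    moreover have "\<forall>m. mu (B \<inter> U m) \<le> 1"
      using mu_le_1[OF \<B> BU[OF that]] by blast
    ultimately show ?thesis
      by (rule incseq_convergent) (auto simp: convergent_def)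
  qed
  then obtain L where L: "\<And>B. B \<in> \<B> \<Longrightarrow> (\<lambda>m. mu (B \<inter> U m)) \<longlonglongrightarrow> L B"
    unfolding convergent_def by metis
  moreover obtain k where "filterlim k at_top sequentially"
    "\<And>B. B \<in> \<B> \<Longrightarrow> (\<lambda>n. lam (slice (B \<inter> U (k n)) n)) \<longlonglongrightarrow> L B"
    using diagonal_tendsto_countable[where g = "\<lambda>B m n. lam (slice (B \<inter> U m) n)"
        and c = "\<lambda>B m. mu (B \<inter> U m)", OF assms(1) admissible_algebra_tendsto_mu[OF \<B> BU] L]
    by blast
  ultimately show ?thesis
    using that by blast
qed

theorem lemma2p4:
  fixes \<B> \<D> :: "X set set"
  assumes "countable \<B>"
    and "admissible_algebra \<B>"
    and "\<D> \<subseteq> \<B>"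
  shows "\<exists>A :: X set.
           admissible_algebra (gen_algebra (\<B> \<union> {A}))
         \<and> (\<forall>D\<in>\<D>. \<forall>\<^sub>F n in sequentially. slice D n \<subseteq> slice A n)
         \<and> ennreal (mu A) \<le> (\<Sum>\<^sub>\<infinity>D\<in>\<D>. ennreal (mu D))"
proof -
  interpret algebra UNIV \<B> using assms(2) unfolding admissible_algebra_def by simp
  obtain U where U: "incseq U" "range U \<subseteq> \<B>" and exhaust: "\<And>D. D \<in> \<D> \<Longrightarrow> \<exists>m. D \<subseteq> U m"
    and U_le: "\<And>m. ennreal (mu (U m)) \<le> (\<Sum>\<^sub>\<infinity>D\<in>\<D>. ennreal (mu D))"
    using exists_exhausting_chain[OF assms(2) countable_subset[OF assms(3,1)] assms(3)] by blast
  obtain k L where k: "filterlim k at_top sequentially"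
    and lam_lim: "\<And>B. B \<in> \<B> \<Longrightarrow> (\<lambda>n. lam (slice (B \<inter> U (k n)) n)) \<longlonglongrightarrow> L B"
    and mu_lim: "\<And>B. B \<in> \<B> \<Longrightarrow> (\<lambda>m. mu (B \<inter> U m)) \<longlonglongrightarrow> L B"
    using exists_diagonal_index[OF assms(1,2) U] by blast
  define A where "A = diag_set U k"
  have "admissible_algebra (gen_algebra (\<B> \<union> {A}))"
  proof (rule admissible_algebra_gen_algebra_insert[OF assms(2)])
    show "\<exists>V\<in>\<B>. slice A n = slice V n" for n
      using U(2) unfolding A_def by auto
    show "convergent (\<lambda>n. lam (slice (B \<inter> A) n))" if "B \<in> \<B>" for B
      using lam_lim[OF that] unfolding A_def convergent_def by auto
  qed
  moreover have "\<forall>\<^sub>F n in sequentially. slice D n \<subseteq> slice A n" if "D \<in> \<D>" for D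
    using exhaust[OF that] eventually_slice_subset_diag_set[OF U(1) k] unfolding A_def by blast
  moreover have "ennreal (mu A) \<le> (\<Sum>\<^sub>\<infinity>D\<in>\<D>. ennreal (mu D))"
  proof -
    have "mu A = L UNIV"
      using lam_lim[OF top] unfolding A_def mu_def by (simp add: limI)
    moreover have "(\<lambda>m. ennreal (mu (U m))) \<longlonglongrightarrow> ennreal (L UNIV)"
      using mu_lim[OF top] by (simp add: tendsto_ennrealI)
    ultimately show ?thesis
      using U_le by (simp add: LIMSEQ_le_const2)
  qed
  ultimately show ?thesis
    by blast
qed

end
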